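(* Let $A$ be a formula and $\Gamma$ an irreducible context that is a maximal decomposition of $A$. Then for every context $\Delta$ and formula $B$, the sequent $A,\Delta\vdash B$ is derivable if and only if $\Gamma,\Delta\vdash B$ is derivable.
   Context: Formulas are built from atoms ($p,q,\dots$) by a binary product: every formula is an atom or $A\bullet B$. A context is a finite (possibly empty) list of formulas; commas denote concatenation; a context is irreducible if its leftmost formula is not a product. The sequent calculus has exactly four rules (no weakening, contraction or exchange): ($\bullet L$) from $A,B,\Delta\vdash C$ infer $A\bullet B,\Delta\vdash C$ (the product must be leftmost); ($\bullet R$) from $\Gamma\vdash A$ and $\Delta\vdash B$ infer $\Gamma,\Delta\vdash A\bullet B$; ($id$) $A\vdash A$; ($cut$) from $\Theta\vdash A$ and $\Gamma,A,\Delta\vdash B$ infer $\Gamma,\Theta,\Delta\vdash B$; derivable means conclusion of a finite derivation tree with no undischarged premises. The substitution order on contexts is the least relation $\le$ such that: (1) if $\Gamma\vdash A$ is derivable then $\Gamma\le A$ (one-element context); (2) $\cdot\le\cdot$ for the empty context; (3) if $\Gamma_1\le\Gamma_2$ and $\Theta_1\le\Theta_2$ then $(\Gamma_1,\Theta_1)\le(\Gamma_2,\Theta_2)$. An irreducible context $\Gamma$ is a maximal decomposition of $A$ if $\Gamma\vdash A$ is derivable and for every irreducible context $\Theta$ with $\Theta\vdash A$ derivable, $\Theta\le\Gamma$. *)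

theory Defs
  imports Main
begin

datatype 'a fm = Atom 'a | Prod "'a fm" "'a fm"

type_synonym 'a ctx = "'a fm list"

inductive derivable :: "'a ctx \<Rightarrow> 'a fm \<Rightarrow> bool" where
  ProdL: "derivable (A # B # \<Delta>) C \<Longrightarrow> derivable (Prod A B # \<Delta>) C"
| ProdR: "derivable \<Gamma> A \<Longrightarrow> derivable \<Delta> B \<Longrightarrow> derivable (\<Gamma> @ \<Delta>) (Prod A B)"
| Id: "derivable [A] A"
| Cut: "derivable \<Theta> A \<Longrightarrow> derivable (\<Gamma> @ [A] @ \<Delta>) B \<Longrightarrow> derivable (\<Gamma> @ \<Theta> @ \<Delta>) B"

definition irreducible :: "'a ctx \<Rightarrow> bool" where
  "irreducible \<Gamma> \<longleftrightarrow> (case \<Gamma> of [] \<Rightarrow> True | (F # _) \<Rightarrow> (\<forall>A B. F \<noteq> Prod A B))"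

inductive subst_le :: "'a ctx \<Rightarrow> 'a ctx \<Rightarrow> bool" where
  base: "derivable \<Gamma> A \<Longrightarrow> subst_le \<Gamma> [A]"
| empty: "subst_le [] []"
| concat: "subst_le \<Gamma>1 \<Gamma>2 \<Longrightarrow> subst_le \<Theta>1 \<Theta>2 \<Longrightarrow> subst_le (\<Gamma>1 @ \<Theta>1) (\<Gamma>2 @ \<Theta>2)"

definition max_decomp :: "'a ctx \<Rightarrow> 'a fm \<Rightarrow> bool" where
  "max_decomp \<Gamma> A \<longleftrightarrow> irreducible \<Gamma> \<and> derivable \<Gamma> A \<and>
     (\<forall>\<Theta>. irreducible \<Theta> \<and> derivable \<Theta> A \<longrightarrow> subst_le \<Theta> \<Gamma>)"

end

theory Submission
  imports Defs
begin

text \<open>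
  Cutting against \<open>\<Gamma> \<turnstile> A\<close> turns \<open>A, \<Delta> \<turnstile> B\<close> into \<open>\<Gamma>, \<Delta> \<turnstile> B\<close>.
  Conversely, the left spine of \<open>A\<close> (the atom at the bottom of its leftmost branch followed by
  the right factors, innermost first) is an irreducible context deriving \<open>A\<close>, so by maximality
  it lies below \<open>\<Gamma>\<close> in the substitution order. Substituting it for \<open>\<Gamma>\<close> by cuts and then
  refolding it with (\<open>\<bullet>L\<close>) yields \<open>A, \<Delta> \<turnstile> B\<close>.
\<close>

fun left_spine :: "'a fm \<Rightarrow> 'a ctx" where
  "left_spine (Atom a) = [Atom a]"
| "left_spine (Prod X Y) = left_spine X @ [Y]"

lemma left_spine_hd_Atom: "\<exists>a rest. left_spine A = Atom a # rest"
  by (induction A) auto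

lemma irreducible_left_spine: "irreducible (left_spine A)"
  using left_spine_hd_Atom[of A] unfolding irreducible_def by auto

lemma derivable_left_spine: "derivable (left_spine A) A"
proof (induction A)
  case (Atom a)
  show ?case by (simp add: derivable.Id)
next
  case (Prod X Y)
  show ?case using derivable.ProdR[OF Prod.IH(1) derivable.Id[of Y]] by simp
qed

lemma derivable_fold_left_spine:
  "derivable (left_spine A @ \<Delta>) C \<Longrightarrow> derivable (A # \<Delta>) C"
proof (induction A arbitrary: \<Delta>)
  case (Atom a)
  then show ?case by simp
next
  case (Prod X Y)
  then have "derivable (X # Y # \<Delta>) C" by simp
  then show ?case by (rule derivable.ProdL)
qed

lemma derivable_subst_le:
  assumes "subst_le \<Theta> \<Gamma>" and "derivable (\<Pi> @ \<Gamma> @ \<Delta>) B"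
  shows "derivable (\<Pi> @ \<Theta> @ \<Delta>) B"
  using assms
proof (induction arbitrary: \<Pi> \<Delta> rule: subst_le.induct)
  case (base \<Gamma> A)
  then show ?case using derivable.Cut[OF base.hyps, of \<Pi> \<Delta> B] by simp
next
  case empty
  then show ?case by simp
next
  case (concat \<Gamma>1 \<Gamma>2 \<Theta>1 \<Theta>2)
  have "derivable ((\<Pi> @ \<Gamma>2) @ \<Theta>2 @ \<Delta>) B" using concat.prems by simp
  then have "derivable ((\<Pi> @ \<Gamma>2) @ \<Theta>1 @ \<Delta>) B" by (rule concat.IH(2))
  then have "derivable (\<Pi> @ \<Gamma>2 @ (\<Theta>1 @ \<Delta>)) B" by simp
  then have "derivable (\<Pi> @ \<Gamma>1 @ (\<Theta>1 @ \<Delta>)) B" by (rule concat.IH(1))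
  then show ?case by simp
qed

theorem proposition2p4:
  fixes A :: "'a fm" and \<Gamma> :: "'a ctx"
  assumes "irreducible \<Gamma>" and "max_decomp \<Gamma> A"
  shows "\<forall>\<Delta> B. derivable (A # \<Delta>) B \<longleftrightarrow> derivable (\<Gamma> @ \<Delta>) B"
proof (intro allI iffI)
  fix \<Delta> B
  have \<Gamma>_A: "derivable \<Gamma> A" and spine_le: "subst_le (left_spine A) \<Gamma>"
    using assms(2) irreducible_left_spine derivable_left_spine unfolding max_decomp_def by auto
  show "derivable (\<Gamma> @ \<Delta>) B" if "derivable (A # \<Delta>) B"
    using derivable.Cut[OF \<Gamma>_A, of "[]" \<Delta> B] that by simp
  show "derivable (A # \<Delta>) B" if "derivable (\<Gamma> @ \<Delta>) B"
  proof (rule derivable_fold_left_spine)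
    show "derivable (left_spine A @ \<Delta>) B"
      using derivable_subst_le[OF spine_le, of "[]" \<Delta> B] that by simp
  qed
qed

end
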